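(* Let the plant transfer function be proper, with the sum of its poles negative (so $a_{n-1}>0$) and its first nonzero Markov parameter positive (so $b_{n-1}\ge0$). Suppose the smooth feedback system $\dot\zeta=A\zeta-B\tanh(\gamma C\zeta)$ possesses a periodic orbit that has a finite period and a finite number of crossings of the hyperplane $\{Cx=0\}$, all transversal. Then, as the gain $\gamma$ is taken to infinity, the linearized flow around this periodic orbit shrinks volume in phase space.
   Context: The plant is $\frac{b(s)}{a(s)}=\frac{b_{n-1}s^{n-1}+\dots+b_0}{s^n+a_{n-1}s^{n-1}+\dots+a_0}$, with realization: $A$ with $A_{i+1,i}=1$ ($i=1,\dots,n-1$), last column $(-a_0,\dots,-a_{n-1})^T$, other entries zero; $B=(b_0,\dots,b_{n-1})^T$; $C=(0,\dots,0,1)$. The linearized flow around a periodic orbit $p(t;\gamma)$ is $\dot\delta=\bigl[A-\frac{\gamma}{\cosh^2(\gamma Cp(t;\gamma))}BC\bigr]\delta$; volume shrinkage over one period means the determinant of its monodromy matrix $\Phi(T_{\rm period},0)$ is less than one. Transversal crossing at $t_0$ means $C\frac{d}{dt}p(t_0;\gamma)\neq0$. *)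

theory Defs
  imports Complex_Main "Jordan_Normal_Form.Determinant"
begin

text \<open>Realization of b(s)/a(s) (0-indexed): a i = a_i, b i = b_i for i < n.\<close>

definition Amat :: "nat \<Rightarrow> (nat \<Rightarrow> real) \<Rightarrow> real mat" where
  "Amat n a = mat n n (\<lambda>(i,j). if j = n - 1 then - a i else if i = j + 1 then 1 else 0)"

definition Bmat :: "nat \<Rightarrow> (nat \<Rightarrow> real) \<Rightarrow> real mat" where
  "Bmat n b = mat n 1 (\<lambda>(i,j). b i)"

definition Cmat :: "nat \<Rightarrow> real mat" where
  "Cmat n = mat 1 n (\<lambda>(i,j). if j = n - 1 then 1 else 0)"

definition Cout :: "nat \<Rightarrow> real vec \<Rightarrow> real" where
  "Cout n x = (Cmat n *\<^sub>v x) $ 0"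

definition markov :: "nat \<Rightarrow> (nat \<Rightarrow> real) \<Rightarrow> (nat \<Rightarrow> real) \<Rightarrow> nat \<Rightarrow> real" where
  "markov n a b k = (Cmat n * (Amat n a ^\<^sub>m k) * Bmat n b) $$ (0,0)"

definition field :: "nat \<Rightarrow> (nat \<Rightarrow> real) \<Rightarrow> (nat \<Rightarrow> real) \<Rightarrow> real \<Rightarrow> real vec \<Rightarrow> real vec" where
  "field n a b \<gamma> x = Amat n a *\<^sub>v x - col (tanh (\<gamma> * Cout n x) \<cdot>\<^sub>m Bmat n b) 0"

definition periodic_orbit :: "nat \<Rightarrow> (nat \<Rightarrow> real) \<Rightarrow> (nat \<Rightarrow> real) \<Rightarrow> real \<Rightarrow> (real \<Rightarrow> real vec) \<Rightarrow> real \<Rightarrow> bool" where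
  "periodic_orbit n a b \<gamma> p T \<longleftrightarrow>
     (\<forall>t. dim_vec (p t) = n) \<and>
     (\<forall>t i. i < n \<longrightarrow> ((\<lambda>s. p s $ i) has_real_derivative (field n a b \<gamma> (p t)) $ i) (at t)) \<and>
     0 < T \<and> (\<forall>t. p (t + T) = p t) \<and>
     (\<forall>s. 0 < s \<and> s < T \<longrightarrow> (\<exists>t. p (t + s) \<noteq> p t))"

definition finite_transversal_crossings :: "nat \<Rightarrow> (nat \<Rightarrow> real) \<Rightarrow> (nat \<Rightarrow> real) \<Rightarrow> real \<Rightarrow> (real \<Rightarrow> real vec) \<Rightarrow> real \<Rightarrow> bool" where
  "finite_transversal_crossings n a b \<gamma> p T \<longleftrightarrow>
     finite {t. 0 \<le> t \<and> t < T \<and> Cout n (p t) = 0} \<and>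
     (\<forall>t. Cout n (p t) = 0 \<longrightarrow> Cout n (field n a b \<gamma> (p t)) \<noteq> 0)"

definition linmat :: "nat \<Rightarrow> (nat \<Rightarrow> real) \<Rightarrow> (nat \<Rightarrow> real) \<Rightarrow> real \<Rightarrow> (real \<Rightarrow> real vec) \<Rightarrow> real \<Rightarrow> real mat" where
  "linmat n a b \<gamma> p t = Amat n a - (\<gamma> / (cosh (\<gamma> * Cout n (p t)))\<^sup>2) \<cdot>\<^sub>m (Bmat n b * Cmat n)"

definition fundamental_matrix :: "nat \<Rightarrow> (real \<Rightarrow> real mat) \<Rightarrow> (real \<Rightarrow> real mat) \<Rightarrow> bool" where
  "fundamental_matrix n M \<Phi> \<longleftrightarrow>
     \<Phi> 0 = 1\<^sub>m n \<and> (\<forall>t. \<Phi> t \<in> carrier_mat n n) \<and>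
     (\<forall>t i j. i < n \<longrightarrow> j < n \<longrightarrow>
        ((\<lambda>s. \<Phi> s $$ (i,j)) has_real_derivative (M t * \<Phi> t) $$ (i,j)) (at t))"

end

theory Submission imports Defs begin

text \<open>By Liouville's formula the monodromy determinant solves \<open>(det \<Phi>)' = tr M(t) \<cdot> det \<Phi>\<close>
  with \<open>det \<Phi>(0) = 1\<close>, so it ends below one as soon as the trace is negative throughout the period.
  In the companion realization the only nonzero diagonal entry of \<open>M(t) = A - \<gamma> sech\<^sup>2(\<gamma> C p(t)) B C\<close>
  is the last one, \<open>-a(n-1) - \<gamma> sech\<^sup>2(\<gamma> C p(t)) b(n-1)\<close>, and \<open>b(n-1) = C B\<close> is the zeroth Markov
  parameter, which is nonnegative when the first nonzero one is positive. Hence the trace is negative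
  for every \<open>\<gamma> > 0\<close>: of the orbit hypotheses only \<open>T > 0\<close> is used.\<close>

definition trace_mat :: "'a::comm_monoid_add mat \<Rightarrow> 'a" where
  "trace_mat A = (\<Sum>i = 0..<dim_row A. A $$ (i,i))"

definition replace_row :: "nat \<Rightarrow> 'a mat \<Rightarrow> 'a mat \<Rightarrow> 'a mat" where
  "replace_row i D A = mat (dim_row A) (dim_col A) (\<lambda>(r,c). if r = i then D $$ (i,c) else A $$ (r,c))"

lemma replace_row_carrier [simp]: "replace_row i D A \<in> carrier_mat (dim_row A) (dim_col A)"
  by (simp add: replace_row_def)

lemma det_replace_row:
  fixes A D :: "'a::comm_ring_1 mat"
  assumes A: "A \<in> carrier_mat n n" and i: "i < n"
  shows "det (replace_row i D A) = (\<Sum>p | p permutes {0..<n}.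
           signof p * (D $$ (i, p i) * (\<Prod>j \<in> {0..<n} - {i}. A $$ (j, p j))))"
proof -
  have "det (replace_row i D A) =
      (\<Sum>p | p permutes {0..<n}. signof p * (\<Prod>j = 0..<n. replace_row i D A $$ (j, p j)))"
    using A replace_row_carrier[of i D A] by (intro det_def') simp
  also have "\<dots> = (\<Sum>p | p permutes {0..<n}.
      signof p * (D $$ (i, p i) * (\<Prod>j \<in> {0..<n} - {i}. A $$ (j, p j))))"
  proof (intro sum.cong refl)
    fix p assume "p \<in> {p. p permutes {0..<n}}"
    then have p_lt: "j < n \<Longrightarrow> p j < n" for j by (auto dest: permutes_in_image)
    have "(\<Prod>j = 0..<n. replace_row i D A $$ (j, p j))
        = replace_row i D A $$ (i, p i) * (\<Prod>j \<in> {0..<n} - {i}. replace_row i D A $$ (j, p j))"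
      using i by (intro prod.remove) auto
    also have "\<dots> = D $$ (i, p i) * (\<Prod>j \<in> {0..<n} - {i}. A $$ (j, p j))"
      using A i p_lt by (auto simp: replace_row_def intro!: prod.cong)
    finally show "signof p * (\<Prod>j = 0..<n. replace_row i D A $$ (j, p j)) =
        signof p * (D $$ (i, p i) * (\<Prod>j \<in> {0..<n} - {i}. A $$ (j, p j)))" by simp
  qed
  finally show ?thesis .
qed

lemma det_replace_row_one:
  fixes M :: "'a::comm_ring_1 mat"
  assumes i: "i < n"
  shows "det (replace_row i M (1\<^sub>m n)) = M $$ (i,i)"
proof -
  let ?t = "\<lambda>p. signof p * (M $$ (i, p i) * (\<Prod>j \<in> {0..<n} - {i}. 1\<^sub>m n $$ (j, p j)))"
  have vanish: "?t p = 0" if p: "p permutes {0..<n}" and "p \<noteq> id" for p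
  proof -
    \<comment> \<open>a permutation fixing every point but \<open>i\<close> permutes \<open>{i}\<close>, hence is the identity\<close>
    obtain j where j: "j \<in> {0..<n} - {i}" "p j \<noteq> j"
      using permutes_superset[OF p, of "{i}"] \<open>p \<noteq> id\<close> by auto
    moreover have "p j < n" using p j by (auto dest: permutes_in_image)
    ultimately have "(\<Prod>j \<in> {0..<n} - {i}. 1\<^sub>m n $$ (j, p j)) = (0::'a)"
      using j by (intro prod_zero) (auto intro!: bexI[of _ j])
    then show ?thesis by simp
  qed
  have "det (replace_row i M (1\<^sub>m n)) = (\<Sum>p | p permutes {0..<n}. ?t p)"
    using i by (intro det_replace_row) auto
  also have "\<dots> = (\<Sum>p \<in> {id}. ?t p)"
    using vanish by (intro sum.mono_neutral_right) (auto simp: finite_permutations)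
  also have "\<dots> = M $$ (i,i)" by (simp add: sign_id)
  finally show ?thesis .
qed

lemma replace_row_mult:
  fixes M A :: "'a::comm_ring_1 mat"
  assumes M: "M \<in> carrier_mat n n" and A: "A \<in> carrier_mat n m" and i: "i < n"
  shows "replace_row i (M * A) A = replace_row i M (1\<^sub>m n) * A"
proof (rule eq_matI)
  fix r c assume "r < dim_row (replace_row i M (1\<^sub>m n) * A)" "c < dim_col (replace_row i M (1\<^sub>m n) * A)"
  then have r: "r < n" and c: "c < m" using A by (auto simp: replace_row_def)
  show "replace_row i (M * A) A $$ (r, c) = (replace_row i M (1\<^sub>m n) * A) $$ (r, c)"
  proof (cases "r = i")
    case True
    then show ?thesis using M A r c by (simp add: replace_row_def scalar_prod_def)
  next
    case False
    have "(\<Sum>k = 0..<n. replace_row i M (1\<^sub>m n) $$ (r,k) * A $$ (k,c))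
        = (\<Sum>k = 0..<n. if k = r then A $$ (k,c) else 0)"
      using False r by (intro sum.cong) (auto simp: replace_row_def)
    then show ?thesis using False A r c by (simp add: replace_row_def scalar_prod_def)
  qed
qed (use A in \<open>auto simp: replace_row_def\<close>)

lemma det_replace_row_mult:
  fixes M A :: "'a::comm_ring_1 mat"
  assumes M: "M \<in> carrier_mat n n" and A: "A \<in> carrier_mat n n" and i: "i < n"
  shows "det (replace_row i (M * A) A) = M $$ (i,i) * det A"
proof -
  have "det (replace_row i (M * A) A) = det (replace_row i M (1\<^sub>m n)) * det A"
    unfolding replace_row_mult[OF M A i]
    by (rule det_mult[OF _ A]) (metis replace_row_carrier index_one_mat(2,3))
  then show ?thesis using i by (simp add: det_replace_row_one)
qed

lemma det_has_field_derivative_rows: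
  fixes P :: "'a::real_normed_field \<Rightarrow> 'a mat"
  assumes P: "\<And>s. P s \<in> carrier_mat n n"
    and P': "\<And>i j. i < n \<Longrightarrow> j < n \<Longrightarrow>
       ((\<lambda>s. P s $$ (i,j)) has_field_derivative D $$ (i,j)) (at t)"
  shows "((\<lambda>s. det (P s)) has_field_derivative
           (\<Sum>i = 0..<n. det (replace_row i D (P t)))) (at t)"
proof -
  let ?Ps = "{p. p permutes {0..<n}}"
  have "((\<lambda>s. \<Sum>p\<in>?Ps. signof p * (\<Prod>j = 0..<n. P s $$ (j, p j))) has_field_derivative
      (\<Sum>p\<in>?Ps. signof p * (\<Sum>i = 0..<n. D $$ (i, p i) * (\<Prod>j \<in> {0..<n} - {i}. P t $$ (j, p j)))))
      (at t)"
  proof (intro DERIV_sum DERIV_cmult)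
    fix p assume "p \<in> ?Ps"
    then show "((\<lambda>s. \<Prod>j = 0..<n. P s $$ (j, p j)) has_field_derivative
        (\<Sum>i = 0..<n. D $$ (i, p i) * (\<Prod>j \<in> {0..<n} - {i}. P t $$ (j, p j)))) (at t)"
      using P' by (intro has_field_derivative_prod) (auto dest: permutes_in_image)
  qed
  moreover have "(\<lambda>s. det (P s)) = (\<lambda>s. \<Sum>p\<in>?Ps. signof p * (\<Prod>j = 0..<n. P s $$ (j, p j)))"
    using det_def'[OF P] by blast
  moreover have "(\<Sum>p\<in>?Ps. signof p * (\<Sum>i = 0..<n. D $$ (i, p i) * (\<Prod>j \<in> {0..<n} - {i}. P t $$ (j, p j))))
      = (\<Sum>i = 0..<n. \<Sum>p\<in>?Ps. signof p * (D $$ (i, p i) * (\<Prod>j \<in> {0..<n} - {i}. P t $$ (j, p j))))"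
    by (simp add: sum_distrib_left) (rule sum.swap)
  moreover have "\<dots> = (\<Sum>i = 0..<n. det (replace_row i D (P t)))"
    using P by (intro sum.cong) (simp_all add: det_replace_row[OF P])
  ultimately show ?thesis by simp
qed

lemma det_has_field_derivative_linear_ode:
  fixes P :: "'a::real_normed_field \<Rightarrow> 'a mat"
  assumes P: "\<And>s. P s \<in> carrier_mat n n" and M: "M \<in> carrier_mat n n"
    and P': "\<And>i j. i < n \<Longrightarrow> j < n \<Longrightarrow>
       ((\<lambda>s. P s $$ (i,j)) has_field_derivative (M * P t) $$ (i,j)) (at t)"
  shows "((\<lambda>s. det (P s)) has_field_derivative trace_mat M * det (P t)) (at t)"
proof -
  have "(\<Sum>i = 0..<n. det (replace_row i (M * P t) (P t))) = trace_mat M * det (P t)"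
    using M P by (simp add: det_replace_row_mult trace_mat_def sum_distrib_right)
  then show ?thesis using det_has_field_derivative_rows[OF P P'] by simp
qed

text \<open>\<open>f\<^sup>2\<close> is nonincreasing whatever the sign of \<open>f\<close>; the mean value theorem makes the decrease strict.\<close>

lemma linear_ode_abs_decreasing:
  fixes f \<tau> :: "real \<Rightarrow> real"
  assumes T: "T > 0" and f0: "f 0 \<noteq> 0" and \<tau>: "\<And>t. \<tau> t < 0"
    and f': "\<And>t. (f has_real_derivative \<tau> t * f t) (at t)"
  shows "\<bar>f T\<bar> < \<bar>f 0\<bar>"
proof -
  define h where "h s = (f s)\<^sup>2" for s
  have h': "(h has_real_derivative 2 * \<tau> t * (f t)\<^sup>2) (at t)" for t
    unfolding h_def using DERIV_power[OF f'[of t], of 2]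
    by (simp add: power2_eq_square algebra_simps)
  have h'_nonpos: "2 * \<tau> t * (f t)\<^sup>2 \<le> 0" for t
    using \<tau>[of t] by (simp add: mult_nonpos_nonneg)
  obtain z where z: "0 < z" "z < T" and mvt: "h T - h 0 = T * (2 * \<tau> z * (f z)\<^sup>2)"
    using MVT2[OF T, of h] h' by fastforce
  have "h T \<le> h z"
  proof (rule DERIV_nonpos_imp_nonincreasing[of z T h])
    show "\<exists>y. (h has_real_derivative y) (at x) \<and> y \<le> 0" if "z \<le> x" "x \<le> T" for x
      using h' h'_nonpos by blast
  qed (use z in simp)
  have "h T < h 0"
  proof (cases "f z = 0")
    case True
    then show ?thesis using \<open>h T \<le> h z\<close> f0 by (simp add: h_def)
  next
    case False
    then have "2 * \<tau> z * (f z)\<^sup>2 < 0" using \<tau>[of z] by (simp add: mult_neg_pos)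
    then have "T * (2 * \<tau> z * (f z)\<^sup>2) < 0" by (rule mult_pos_neg[OF T])
    then show ?thesis using mvt by linarith
  qed
  then show ?thesis using real_sqrt_less_mono[of "h T" "h 0"] by (simp add: h_def)
qed

lemma det_fundamental_matrix_lt_one:
  assumes \<Phi>: "fundamental_matrix n M \<Phi>" and M: "\<And>t. M t \<in> carrier_mat n n"
    and trace_neg: "\<And>t. trace_mat (M t) < 0" and T: "T > 0"
  shows "det (\<Phi> T) < 1"
proof -
  have det0: "det (\<Phi> 0) = 1" using \<Phi> by (simp add: fundamental_matrix_def)
  have "((\<lambda>s. det (\<Phi> s)) has_real_derivative trace_mat (M t) * det (\<Phi> t)) (at t)" for t
    using \<Phi> by (intro det_has_field_derivative_linear_ode[OF _ M]) (auto simp: fundamental_matrix_def)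
  then have "\<bar>det (\<Phi> T)\<bar> < \<bar>det (\<Phi> 0)\<bar>"
    using det0 by (intro linear_ode_abs_decreasing[OF T _ trace_neg]) auto
  then show ?thesis using det0 by simp
qed

lemma markov_0:
  assumes "n \<ge> 1"
  shows "markov n a b 0 = b (n - 1)"
proof -
  have "markov n a b 0 = (\<Sum>k = 0..<n. (if k = n - 1 then 1 else 0) * b k)"
    by (simp add: markov_def Amat_def Bmat_def Cmat_def scalar_prod_def)
  also have "\<dots> = (\<Sum>k = 0..<n. if k = n - 1 then b k else 0)"
    by (intro sum.cong) auto
  finally show ?thesis using assms by simp
qed

lemma linmat_carrier: "linmat n a b \<gamma> p t \<in> carrier_mat n n"
  unfolding linmat_def Amat_def Bmat_def Cmat_def
  by (rule minus_carrier_mat) (auto intro: mult_carrier_mat)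

lemma trace_linmat:
  assumes "n \<ge> 1"
  shows "trace_mat (linmat n a b \<gamma> p t) = - a (n - 1) - \<gamma> / (cosh (\<gamma> * Cout n (p t)))\<^sup>2 * b (n - 1)"
proof -
  have "trace_mat (linmat n a b \<gamma> p t) = (\<Sum>i = 0..<n.
      if i = n - 1 then - a (n - 1) - \<gamma> / (cosh (\<gamma> * Cout n (p t)))\<^sup>2 * b (n - 1) else 0)"
    using linmat_carrier[of n a b \<gamma> p t] unfolding trace_mat_def
    by (intro sum.cong) (auto simp: linmat_def Amat_def Bmat_def Cmat_def scalar_prod_def)
  then show ?thesis using assms by simp
qed

lemma last_b_nonneg_if_first_markov_pos:
  assumes "n \<ge> 1" and "\<exists>k. (\<forall>j<k. markov n a b j = 0) \<and> markov n a b k > 0"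
  shows "b (n - 1) \<ge> 0"
proof -
  obtain k where "\<forall>j<k. markov n a b j = 0" "markov n a b k > 0" using assms(2) by blast
  then have "markov n a b 0 \<ge> 0" by (cases k) auto
  then show ?thesis using markov_0[OF assms(1)] by simp
qed

lemma trace_linmat_neg:
  assumes "n \<ge> 1" and "\<gamma> \<ge> 0" and "a (n - 1) > 0" and "b (n - 1) \<ge> 0"
  shows "trace_mat (linmat n a b \<gamma> p t) < 0"
proof -
  have "\<gamma> / (cosh (\<gamma> * Cout n (p t)))\<^sup>2 * b (n - 1) \<ge> 0"
    using assms by simp
  then show ?thesis unfolding trace_linmat[OF assms(1)] using assms(3) by linarith
qed

theorem mainTheorem17:
  fixes n :: nat and a b :: "nat \<Rightarrow> real"
    and p :: "real \<Rightarrow> real \<Rightarrow> real vec" and T :: "real \<Rightarrow> real"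
  assumes n: "n \<ge> 1"
    and pole_sum: "a (n - 1) > 0"
    and markov_pos: "\<exists>k. (\<forall>j<k. markov n a b j = 0) \<and> markov n a b k > 0"
    and orbit: "\<forall>\<^sub>F \<gamma> in at_top. periodic_orbit n a b \<gamma> (p \<gamma>) (T \<gamma>)
                   \<and> finite_transversal_crossings n a b \<gamma> (p \<gamma>) (T \<gamma>)"
  shows "\<forall>\<^sub>F \<gamma> in at_top. \<forall>\<Phi>. fundamental_matrix n (linmat n a b \<gamma> (p \<gamma>)) \<Phi>
             \<longrightarrow> det (\<Phi> (T \<gamma>)) < 1"
proof -
  have "b (n - 1) \<ge> 0" using last_b_nonneg_if_first_markov_pos[OF n markov_pos] .
  then have trace_neg: "trace_mat (linmat n a b \<gamma> (p \<gamma>) t) < 0" if "\<gamma> > 0" for \<gamma> t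
    using n pole_sum that by (intro trace_linmat_neg) auto
  have "\<forall>\<^sub>F \<gamma> in at_top. T \<gamma> > 0 \<and> \<gamma> > 0"
    using eventually_conj[OF orbit eventually_gt_at_top[of 0]]
    by eventually_elim (simp add: periodic_orbit_def)
  then show ?thesis
    by eventually_elim (use linmat_carrier trace_neg det_fundamental_matrix_lt_one in blast)
qed

end
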